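(* Let $\mathcal{W}$ be a $d_2$-dimensional subspace of $\mathbb{R}^n$ and $\mathcal{S}$ a $d_1$-dimensional subspace of $\mathbb{R}^n$ with $d_1 \le d_2$. Let $\mathbf{W} \in \mathbb{R}^{n\times d_2}$ and $\mathbf{S} \in \mathbb{R}^{n\times d_1}$ be matrices whose columns are orthonormal bases of $\mathcal{W}$ and $\mathcal{S}$, and let $\mathbf{W}^\top \mathbf{S} = \mathbf{U}\mathbf{\Sigma}\mathbf{V}^\top$ be a (thin) singular value decomposition with $\mathbf{U} \in \mathbb{R}^{d_2\times d_1}$ having orthonormal columns, $\mathbf{\Sigma} \in \mathbb{R}^{d_1\times d_1}$ diagonal with nonnegative entries, and $\mathbf{V} \in \mathbb{R}^{d_1\times d_1}$ orthogonal. Then the $d_1$-dimensional subspace $\mathcal{S}' = \mathrm{span}(\mathbf{W}\mathbf{U})$, which is contained in $\mathcal{W}$, is a subspace projection of $\mathcal{S}$ onto $\mathcal{W}$, i.e. $$\mathcal{S}' \in \underset{\mathcal{S}'' \subseteq \mathcal{W},\ \dim \mathcal{S}'' = d_1}{\operatorname{argmin}}\ \rho(\mathcal{S}, \mathcal{S}''),$$ where $\rho$ denotes the geodesic distance on the Grassmann manifold $\mathsf{Gr}(d_1, n)$.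
   Context: The Grassmann manifold $\mathsf{Gr}(d,n)$ is the set of $d$-dimensional linear subspaces of $\mathbb{R}^n$. The geodesic distance between two $d$-dimensional subspaces $\mathcal{A}, \mathcal{B}$ is $\rho(\mathcal{A},\mathcal{B}) = \big(\sum_{i=1}^{d} \theta_i^2\big)^{1/2}$, where $\theta_1,\dots,\theta_d \in [0,\pi/2]$ are the canonical angles between $\mathcal{A}$ and $\mathcal{B}$ (the arccosines of the singular values of $\mathbf{A}^\top\mathbf{B}$ for orthonormal basis matrices $\mathbf{A},\mathbf{B}$). The subspace projection $\omega(\mathcal{S})$ of a $d_1$-dimensional subspace $\mathcal{S}$ onto a $d_2$-dimensional subspace $\mathcal{W}$ ($d_2 \ge d_1$) is defined as a $d_1$-dimensional subspace $\mathcal{S}' \subseteq \mathcal{W}$ minimizing $\rho(\mathcal{S}, \mathcal{S}')$. *)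

theory Defs
  imports "HOL-Analysis.Analysis"
begin

text \<open>Subspaces of R^n are sets of vectors of type real^'n. A matrix with k rows and
d columns is of type real^'d^'k.\<close>

definition onb_matrix :: "real^'d^'n \<Rightarrow> (real^'n) set \<Rightarrow> bool" where
  "onb_matrix A X \<longleftrightarrow> transpose A ** A = mat 1 \<and> span (columns A) = X"

definition is_svd :: "real^'d^'k \<Rightarrow> real^'d^'k \<Rightarrow> real^'d^'d \<Rightarrow> real^'d^'d \<Rightarrow> bool" where
  "is_svd M U Sig V \<longleftrightarrow>
     transpose U ** U = mat 1 \<and>
     (\<forall>i j. i \<noteq> j \<longrightarrow> Sig $ i $ j = 0) \<and> (\<forall>i. Sig $ i $ i \<ge> 0) \<and>
     transpose V ** V = mat 1 \<and> V ** transpose V = mat 1 \<and>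
     M = U ** Sig ** transpose V"

text \<open>Geodesic distance on Gr(d,n), d = CARD('d): canonical angles are arccos of the
singular values of A^T B for orthonormal basis matrices A, B (the value is independent of
the choices, so Hilbert choice picks the well-defined quantity).\<close>
definition grassmann_dist :: "'d::finite itself \<Rightarrow> (real^'n) set \<Rightarrow> (real^'n) set \<Rightarrow> real" where
  "grassmann_dist _ X Y = (SOME r. \<exists>(A::real^'d^'n) (B::real^'d^'n) (U::real^'d^'d) Sig V.
      onb_matrix A X \<and> onb_matrix B Y \<and> is_svd (transpose A ** B) U Sig V \<and>
      r = sqrt (\<Sum>i\<in>UNIV. (arccos (Sig $ i $ i))\<^sup>2))"

definition is_subspace_projection ::
  "'d::finite itself \<Rightarrow> (real^'n) set \<Rightarrow> (real^'n) set \<Rightarrow> (real^'n) set \<Rightarrow> bool" where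
  "is_subspace_projection t S W S' \<longleftrightarrow>
     subspace S' \<and> S' \<subseteq> W \<and> dim S' = CARD('d) \<and>
     (\<forall>S''. subspace S'' \<and> S'' \<subseteq> W \<and> dim S'' = CARD('d) \<longrightarrow>
        grassmann_dist t S S' \<le> grassmann_dist t S S'')"

end

(* With P = W W^T the orthogonal projection onto WW, the SVD W^T S = U Sig V^T shows that P
   maps SS into S' = span (W U). For a d1-dimensional S'' inside WW and y in SS, the projection
   of y onto S'' is no longer than P y, which is the projection of y onto S'. So on SS the
   quadratic form |proj_S'' y|^2 is dominated by |proj_S' y|^2. Their eigenvalues are the
   squared cosines of the canonical angles, and a dimension count as in Courant-Fischer shows
   that every superlevel set of the first spectrum is at most as large as that of the second;
   as arccos is decreasing, the canonical angles of (SS, S') are the smaller ones.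
   Since the distance is defined by Hilbert choice, the comparison is made for arbitrary
   orthonormal bases and SVDs; their existence (from the spectral theorem, proved by
   maximising the Rayleigh quotient) keeps the choice from being vacuous. *)

theory Submission
  imports Defs
begin

declare transpose_matrix_vector[simp del] vector_transpose_matrix[simp del]

section \<open>Matrices with orthonormal columns\<close>

lemma inner_transpose_mult: "(transpose A *v x) \<bullet> (y::real^_) = x \<bullet> (A *v y)"
  by (metis dot_lmul_matrix transpose_matrix_vector)

lemma columns_eq_range: "columns A = range (\<lambda>i. column i A)"
  by (auto simp: columns_def)

lemma column_matrix_mult: "column i (A ** B) = A *v column i B"
  by (simp add: vec_eq_iff column_def matrix_matrix_mult_def matrix_vector_mult_def)

lemma transpose_mult_component: "(transpose A *v x) $ j = column j A \<bullet> (x::real^_)"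
  by (simp add: matrix_vector_mult_def transpose_def column_def inner_vec_def)

lemma orthonormal_columns_iff:
  fixes A :: "real^'d^'n"
  shows "transpose A ** A = mat 1 \<longleftrightarrow> (\<forall>i j. column i A \<bullet> column j A = (if i = j then 1 else 0))"
  by (simp add: matrix_mult_transpose_dot_column vec_eq_iff mat_def)

lemma orthonormal_columns_mult:
  fixes A :: "real^'e^'n" and B :: "real^'d^'e"
  assumes "transpose A ** A = mat 1" "transpose B ** B = mat 1"
  shows "transpose (A ** B) ** (A ** B) = mat 1"
proof -
  have "transpose (A ** B) ** (A ** B) = transpose B ** (transpose A ** A) ** B"
    by (simp add: matrix_transpose_mul matrix_mul_assoc)
  then show ?thesis using assms by simp
qed

lemma norm_orthonormal_columns_mult:
  fixes A :: "real^'d^'n"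
  assumes "transpose A ** A = mat 1"
  shows "norm (A *v u) = norm u"
proof -
  have "(A *v u) \<bullet> (A *v u) = u \<bullet> ((transpose A ** A) *v u)"
    by (metis inner_transpose_mult transpose_transpose matrix_vector_mul_assoc)
  then show ?thesis using assms by (simp add: norm_eq_sqrt_inner)
qed

lemma orthonormal_columns_project_span:
  fixes A :: "real^'d^'n"
  assumes "transpose A ** A = mat 1" "z \<in> span (columns A)"
  shows "A *v (transpose A *v z) = z"
proof -
  have "span (columns A) \<subseteq> {z. A *v (transpose A *v z) = z}"
  proof (rule span_minimal)
    show "columns A \<subseteq> {z. A *v (transpose A *v z) = z}"
    proof
      fix c assume "c \<in> columns A"
      then obtain i where "c = column i A" by (auto simp: columns_def)
      then have e: "c = A *v axis i 1" by (simp add: matrix_vector_mult_basis)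
      have "A *v (transpose A *v (A *v axis i 1)) = A *v ((transpose A ** A) *v axis i 1)"
        by (simp only: matrix_vector_mul_assoc)
      then show "c \<in> {z. A *v (transpose A *v z) = z}"
        using assms(1) e by simp
    qed
    show "subspace {z. A *v (transpose A *v z) = z}"
      by (auto simp: subspace_def matrix_vector_right_distrib matrix_vector_mult_scaleR)
  qed
  then show ?thesis using assms(2) by auto
qed

lemma norm_transpose_orthonormal_columns_le:
  fixes A :: "real^'d^'n"
  assumes "transpose A ** A = mat 1"
  shows "norm (transpose A *v z) \<le> norm z"
proof -
  let ?u = "transpose A *v z"
  have "(norm ?u)\<^sup>2 = (A *v ?u) \<bullet> z"
    by (metis inner_transpose_mult inner_commute transpose_transpose power2_norm_eq_inner)
  also have "\<dots> \<le> norm ?u * norm z"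
    using norm_cauchy_schwarz[of "A *v ?u" z] norm_orthonormal_columns_mult[OF assms] by simp
  finally have "norm ?u * norm ?u \<le> norm ?u * norm z" by (simp add: power2_eq_square)
  then show ?thesis by (cases "?u = 0") (auto simp: mult_le_cancel_left)
qed

lemma inj_on_orthonormal_family:
  assumes "\<And>i j. i \<in> I \<Longrightarrow> j \<in> I \<Longrightarrow> g i \<bullet> g j = (if i = j then 1 else (0::real))"
  shows "inj_on g I"
proof (rule inj_onI)
  fix i j assume "i \<in> I" "j \<in> I" "g i = g j"
  then show "i = j" using assms[of i j] assms[of i i] by (simp split: if_splits)
qed

lemma dim_orthonormal_family:
  fixes g :: "'i \<Rightarrow> 'a::euclidean_space"
  assumes orth: "\<And>i j. i \<in> I \<Longrightarrow> j \<in> I \<Longrightarrow> g i \<bullet> g j = (if i = j then 1 else 0)"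
  shows "dim (g ` I) = card I"
proof -
  have "pairwise orthogonal (g ` I)"
    using orth by (auto simp: pairwise_def orthogonal_def)
  moreover have "0 \<notin> g ` I"
    using orth by (auto simp: image_iff) (metis inner_zero_left zero_neq_one)
  ultimately have "independent (g ` I)" by (rule pairwise_orthogonal_independent)
  then show ?thesis
    using inj_on_orthonormal_family[OF orth] by (simp add: dim_eq_card_independent card_image)
qed

lemma dim_orthonormal_columns:
  fixes A :: "real^'d^'n"
  assumes "transpose A ** A = mat 1"
  shows "dim ((\<lambda>i. column i A) ` I) = card I"
  by (rule dim_orthonormal_family) (use assms in \<open>simp add: orthonormal_columns_iff\<close>)

lemma dim_columns_orthonormal:
  fixes A :: "real^'d^'n"
  assumes "transpose A ** A = mat 1"
  shows "dim (columns A) = CARD('d)"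
  using dim_orthonormal_columns[OF assms, of UNIV] by (simp add: columns_eq_range)

lemma span_columns_matrix_mult_subset: "span (columns (A ** B)) \<subseteq> span (columns (A::real^'e^'n))"
  using matrix_vector_mult_in_columnspace[of A]
  by (intro span_minimal) (auto simp: columns_eq_range column_matrix_mult)

lemma orthonormal_family_inner:
  fixes g :: "'d \<Rightarrow> 'a::real_inner"
  assumes "pairwise orthogonal E" "\<And>e. e \<in> E \<Longrightarrow> norm e = 1" "inj_on g I" "g ` I \<subseteq> E"
    "i \<in> I" "j \<in> I"
  shows "g i \<bullet> g j = (if i = j then 1 else 0)"
proof (cases "i = j")
  case True
  then show ?thesis using assms(2,4,5) by (auto simp: norm_eq_1)
next
  case False
  then have "g i \<noteq> g j" using assms(3,5,6) by (auto simp: inj_on_def)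
  then show ?thesis using assms(1,4,5,6) False by (auto simp: pairwise_def orthogonal_def)
qed

definition matrix_of_columns :: "('d::finite \<Rightarrow> real^'n) \<Rightarrow> real^'d^'n" where
  "matrix_of_columns g = transpose (\<chi> i. g i)"

lemma column_matrix_of_columns [simp]: "column i (matrix_of_columns g) = g i"
  by (simp add: matrix_of_columns_def row_def)

lemma orthonormal_columns_matrix_of_columns:
  assumes "\<And>i j. g i \<bullet> g j = (if i = j then 1 else 0)"
  shows "transpose (matrix_of_columns g) ** matrix_of_columns g = mat 1"
  using assms by (simp add: orthonormal_columns_iff)

lemma onb_matrix_exists:
  fixes X :: "(real^'n) set"
  assumes "subspace X" "dim X = CARD('d::finite)"
  obtains A :: "real^'d^'n" where "onb_matrix A X"
proof -
  obtain B where B: "B \<subseteq> X" "pairwise orthogonal B" "\<And>x. x \<in> B \<Longrightarrow> norm x = 1"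
    "independent B" "card B = dim X" "span B = X"
    using orthonormal_basis_subspace[OF assms(1)] by metis
  have "finite B" using B(4) by (rule independent_imp_finite)
  then obtain g where g: "bij_betw g (UNIV::'d set) B"
    using finite_same_card_bij[of "UNIV::'d set" B] B(5) assms(2) by auto
  have "g i \<bullet> g j = (if i = j then 1 else 0)" for i j
    by (rule orthonormal_family_inner[OF B(2,3)]) (use g in \<open>auto simp: bij_betw_def\<close>)
  then have "transpose (matrix_of_columns g) ** matrix_of_columns g = mat 1"
    by (rule orthonormal_columns_matrix_of_columns)
  moreover have "span (columns (matrix_of_columns g)) = X"
    using g B(6) by (simp add: columns_eq_range bij_betw_def)
  ultimately show ?thesis using that unfolding onb_matrix_def by blast
qed

section \<open>Spectral theorem and singular value decomposition\<close>

lemma inner_symmetric_matrix: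
  fixes K :: "real^'d^'d"
  assumes "transpose K = K"
  shows "x \<bullet> (K *v y) = (K *v x) \<bullet> y"
  using inner_transpose_mult[of K x y] assms by simp

lemma rayleigh_maximizer_eigenvector:
  fixes K :: "real^'d^'d"
  assumes sym: "transpose K = K" and X: "subspace X" and inv: "\<And>x. x \<in> X \<Longrightarrow> K *v x \<in> X"
    and v: "v \<in> X" "v \<bullet> v = 1"
    and max: "\<And>x. x \<in> X \<Longrightarrow> x \<bullet> (K *v x) \<le> (v \<bullet> (K *v v)) * (x \<bullet> x)"
  shows "K *v v = (v \<bullet> (K *v v)) *\<^sub>R v"
proof -
  define l where "l = v \<bullet> (K *v v)"
  define w where "w = K *v v - l *\<^sub>R v"
  have wX: "w \<in> X" using inv[OF v(1)] v(1) X by (simp add: w_def subspace_diff subspace_scale)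
  have vw: "v \<bullet> w = 0" unfolding w_def l_def using v(2) by (simp add: inner_diff_right)
  have "w \<bullet> w = w \<bullet> (K *v v) - l * (v \<bullet> w)"
    by (simp add: w_def inner_diff_left inner_diff_right inner_commute algebra_simps)
  then have wKv: "w \<bullet> (K *v v) = w \<bullet> w" by (simp add: vw)
  have c: "0 \<le> l * (w \<bullet> w) - w \<bullet> (K *v w)" using max[OF wX] by (simp add: l_def)
  \<comment> \<open>maximality of v, tested at v + s w, gives 2 s |w|^2 \<le> s^2 c for every s\<close>
  have test: "2 * s * (w \<bullet> w) \<le> s\<^sup>2 * (l * (w \<bullet> w) - w \<bullet> (K *v w))" for s
  proof -
    have "v + s *\<^sub>R w \<in> X" using v(1) wX X by (simp add: subspace_add subspace_scale)
    from max[OF this] have "l + 2 * s * (w \<bullet> (K *v v)) + s\<^sup>2 * (w \<bullet> (K *v w))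
        \<le> l * (1 + s\<^sup>2 * (w \<bullet> w))"
      using inner_symmetric_matrix[OF sym, of v w] v(2) vw
      by (simp add: matrix_vector_right_distrib matrix_vector_mult_scaleR inner_add_left
          inner_add_right inner_commute l_def power2_eq_square algebra_simps)
    then show ?thesis by (simp add: wKv algebra_simps)
  qed
  have "w \<bullet> w \<le> 0"
  proof (rule field_le_epsilon)
    fix e :: real assume "e > 0"
    define s where "s = e / (l * (w \<bullet> w) - w \<bullet> (K *v w) + 1)"
    have "s > 0" using \<open>e > 0\<close> c by (simp add: s_def)
    with test[of s] have "2 * (w \<bullet> w) \<le> s * (l * (w \<bullet> w) - w \<bullet> (K *v w))"
      by (simp add: power2_eq_square mult.assoc)
    also have "\<dots> \<le> e" using \<open>e > 0\<close> c by (simp add: s_def field_simps)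
    finally show "w \<bullet> w \<le> 0 + e" using inner_ge_zero[of w] by linarith
  qed
  then have "w = 0" using inner_ge_zero[of w] by (simp add: order_antisym)
  then show ?thesis by (simp add: w_def l_def)
qed

lemma symmetric_matrix_eigenvector_in_invariant_subspace:
  fixes K :: "real^'d^'d"
  assumes sym: "transpose K = K" and X: "subspace X" and inv: "\<And>x. x \<in> X \<Longrightarrow> K *v x \<in> X"
    and ne: "X \<noteq> {0}"
  obtains v l where "v \<in> X" "v \<bullet> v = 1" "K *v v = l *\<^sub>R v"
proof -
  define T where "T = sphere (0::real^'d) 1 \<inter> X"
  have "compact T" unfolding T_def
    by (intro compact_Int_closed compact_sphere closed_subspace X)
  moreover obtain x0 where "x0 \<in> X" "x0 \<noteq> 0" using ne X subspace_0 by blast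
  then have "x0 /\<^sub>R norm x0 \<in> T" using X by (auto simp: T_def subspace_scale)
  then have "T \<noteq> {}" by blast
  moreover have "continuous_on T (\<lambda>x. x \<bullet> (K *v x))" by (intro continuous_intros)
  ultimately obtain v where v: "v \<in> T"
    and vmax: "\<And>y. y \<in> T \<Longrightarrow> y \<bullet> (K *v y) \<le> v \<bullet> (K *v v)"
    by (metis continuous_attains_sup)
  have vX: "v \<in> X" and vv: "v \<bullet> v = 1" using v by (auto simp: T_def norm_eq_1)
  have "x \<bullet> (K *v x) \<le> (v \<bullet> (K *v v)) * (x \<bullet> x)" if "x \<in> X" for x
  proof (cases "x = 0")
    case False
    have "x /\<^sub>R norm x \<in> T" using that False X by (auto simp: T_def subspace_scale)
    from vmax[OF this] have "(x \<bullet> (K *v x)) / (norm x)\<^sup>2 \<le> v \<bullet> (K *v v)"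
      by (simp add: matrix_vector_mult_scaleR power2_eq_square field_simps)
    then show ?thesis using False by (simp add: divide_le_eq power2_norm_eq_inner mult.commute)
  qed simp
  from rayleigh_maximizer_eigenvector[OF sym X inv vX vv this] show ?thesis
    using that vX vv by blast
qed

lemma span_insert_orthogonal_complement:
  assumes X: "subspace X" and v: "v \<in> X" "v \<bullet> v = 1" and E: "span E = {x\<in>X. v \<bullet> x = 0}"
  shows "span (insert v E) = X"
proof
  have "E \<subseteq> X" using E span_superset by blast
  then show "span (insert v E) \<subseteq> X" using v(1) X by (intro span_minimal) auto
  show "X \<subseteq> span (insert v E)"
  proof
    fix x assume "x \<in> X"
    then have "x - (v \<bullet> x) *\<^sub>R v \<in> span E"
      using v X E by (auto simp: subspace_diff subspace_scale inner_diff_right)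
    then show "x \<in> span (insert v E)" by (auto simp: span_insert)
  qed
qed

lemma symmetric_matrix_orthonormal_eigenbasis:
  fixes K :: "real^'d^'d"
  assumes sym: "transpose K = K"
  shows "subspace X \<Longrightarrow> (\<And>x. x \<in> X \<Longrightarrow> K *v x \<in> X) \<Longrightarrow>
    \<exists>E. E \<subseteq> X \<and> pairwise orthogonal E \<and> (\<forall>e\<in>E. norm e = 1) \<and> span E = X \<and>
        (\<forall>e\<in>E. \<exists>l. K *v e = l *\<^sub>R e)"
proof (induction "dim X" arbitrary: X rule: less_induct)
  case less
  show ?case
  proof (cases "X = {0}")
    case True
    then show ?thesis by (intro exI[of _ "{}"]) auto
  next
    case False
    obtain v l where vX: "v \<in> X" and vv: "v \<bullet> v = 1" and ev: "K *v v = l *\<^sub>R v"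
      using symmetric_matrix_eigenvector_in_invariant_subspace[OF sym less.prems False] by blast
    define X' where "X' = {x\<in>X. v \<bullet> x = 0}"
    have sX': "subspace X'"
      using less.prems(1) unfolding X'_def subspace_def by (auto simp: inner_add_right)
    have iX': "K *v x \<in> X'" if "x \<in> X'" for x
      using that less.prems(2) inner_symmetric_matrix[OF sym, of v x] by (auto simp: ev X'_def)
    have "v \<notin> X'" using vv by (simp add: X'_def)
    then have "X' \<subset> X" using vX X'_def by blast
    then have "dim X' < dim X"
      using dim_psubset[of X' X] span_eq_iff[THEN iffD2, OF sX'] span_eq_iff[THEN iffD2, OF less.prems(1)]
      by simp
    then obtain E' where E': "E' \<subseteq> X'" "pairwise orthogonal E'" "\<forall>e\<in>E'. norm e = 1"
        "span E' = X'" "\<forall>e\<in>E'. \<exists>l. K *v e = l *\<^sub>R e"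
      using less.hyps[OF _ sX' iX'] by blast
    have "span (insert v E') = X"
      using span_insert_orthogonal_complement[OF less.prems(1) vX vv] E'(4) by (simp add: X'_def)
    moreover have "insert v E' \<subseteq> X" using E'(1) vX by (auto simp: X'_def)
    moreover have "pairwise orthogonal (insert v E')"
      using E'(1,2) by (auto simp: pairwise_insert orthogonal_def X'_def inner_commute)
    moreover have "\<forall>e\<in>insert v E'. norm e = 1" using E'(3) vv by (simp add: norm_eq_1)
    moreover have "\<forall>e\<in>insert v E'. \<exists>l. K *v e = l *\<^sub>R e" using E'(5) ev by blast
    ultimately show ?thesis by blast
  qed
qed

lemma symmetric_matrix_orthonormal_eigenvectors:
  fixes K :: "real^'d::finite^'d"
  assumes "transpose K = K"
  obtains g :: "'d \<Rightarrow> real^'d" and lam where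
    "\<And>i j. g i \<bullet> g j = (if i = j then 1 else 0)" "\<And>i. K *v g i = lam i *\<^sub>R g i"
proof -
  obtain E where E: "pairwise orthogonal E" "\<forall>e\<in>E. norm e = 1" "span E = UNIV"
      "\<forall>e\<in>E. \<exists>l. K *v e = l *\<^sub>R e"
    using symmetric_matrix_orthonormal_eigenbasis[OF assms, of UNIV] by auto
  have "independent E"
    by (rule pairwise_orthogonal_independent) (use E(1,2) in auto)
  then have "finite E" "card E = CARD('d)"
    using independent_imp_finite dim_eq_card_independent[of E] dim_span[of E] E(3) by simp_all
  then obtain g where g: "bij_betw g (UNIV::'d set) E"
    using finite_same_card_bij[of "UNIV::'d set" E] by auto
  have "g i \<bullet> g j = (if i = j then 1 else 0)" for i j
    by (rule orthonormal_family_inner[OF E(1)]) (use E(2) g in \<open>auto simp: bij_betw_def\<close>)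
  moreover have "\<forall>i. \<exists>l. K *v g i = l *\<^sub>R g i" using E(4) g by (auto simp: bij_betw_def)
  then obtain lam where "\<And>i. K *v g i = lam i *\<^sub>R g i" by metis
  ultimately show ?thesis by (rule that)
qed

lemma orthonormal_set_orthogonal_to_subspace:
  fixes F :: "'a::euclidean_space set"
  assumes "subspace F"
  obtains C where "pairwise orthogonal C" "\<And>c. c \<in> C \<Longrightarrow> norm c = 1"
    "\<And>x c. x \<in> F \<Longrightarrow> c \<in> C \<Longrightarrow> orthogonal x c" "card C + dim F = DIM('a)"
proof -
  define Y where "Y = {y. \<forall>x\<in>F. orthogonal x y}"
  have "subspace Y" unfolding Y_def by (rule subspace_orthogonal_to_vectors)
  then obtain C where C: "C \<subseteq> Y" "pairwise orthogonal C" "\<And>x. x \<in> C \<Longrightarrow> norm x = 1"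
    "independent C" "card C = dim Y" "span C = Y"
    by (rule orthonormal_basis_subspace) blast
  have "dim Y + dim F = DIM('a)"
    using dim_subspace_orthogonal_to_vectors[OF assms, of UNIV] by (simp add: Y_def)
  show ?thesis
  proof (rule that[OF C(2,3)])
    show "orthogonal x c" if "x \<in> F" "c \<in> C" for x c using C(1) that by (auto simp: Y_def)
    show "card C + dim F = DIM('a)" using C(5) \<open>dim Y + dim F = DIM('a)\<close> by simp
  qed
qed

lemma orthonormal_family_extend:
  fixes u0 :: "'d::finite \<Rightarrow> real^'n"
  assumes orth: "\<And>i j. i \<in> I \<Longrightarrow> j \<in> I \<Longrightarrow> u0 i \<bullet> u0 j = (if i = j then 1 else 0)"
    and card: "CARD('d) \<le> CARD('n)"
  obtains u where "\<And>i. i \<in> I \<Longrightarrow> u i = u0 i" "\<And>i j. u i \<bullet> u j = (if i = j then 1 else 0)"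
proof -
  obtain C where C: "pairwise orthogonal C" "\<And>c. c \<in> C \<Longrightarrow> norm c = 1"
    and cross: "\<And>x c. x \<in> span (u0 ` I) \<Longrightarrow> c \<in> C \<Longrightarrow> orthogonal x c"
    and card_C: "card C + dim (span (u0 ` I)) = DIM(real^'n)"
    by (rule orthonormal_set_orthogonal_to_subspace[OF subspace_span]) blast
  have "card (- I) + card I = CARD('d)"
    using card_Un_disjoint[of "- I" I] by simp
  then have "card (- I) \<le> card C"
    using card card_C dim_orthonormal_family[OF orth] by simp
  then obtain C' where C': "C' \<subseteq> C" "card C' = card (- I)" "finite C'"
    by (rule obtain_subset_with_card_n)
  then obtain f where f: "bij_betw f (- I) C'"
    using finite_same_card_bij[of "- I" C'] by auto
  define u where "u i = (if i \<in> I then u0 i else f i)" for i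
  have fC: "f i \<in> C" if "i \<notin> I" for i using f C'(1) that by (auto simp: bij_betw_def)
  have cross_u0: "orthogonal (u0 i) c" if "i \<in> I" "c \<in> C" for i c
    using cross that by (simp add: span_base)
  have "pairwise orthogonal (u0 ` I \<union> C)"
    using orth C(1) cross_u0 by (auto simp: pairwise_def orthogonal_def inner_commute)
  moreover have "\<And>e. e \<in> u0 ` I \<union> C \<Longrightarrow> norm e = 1"
    using orth C(2) by (auto simp: norm_eq_1)
  moreover have "inj u"
  proof (rule injI)
    fix i j assume eq: "u i = u j"
    have "u0 i \<noteq> f j" "f j \<noteq> u0 i" if "i \<in> I" "j \<notin> I" for i j
      using cross_u0[OF that(1) fC[OF that(2)]] orth[OF that(1) that(1)] by (auto simp: orthogonal_def)
    then show "i = j"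
      using eq inj_on_orthonormal_family[OF orth] f
      by (cases "i \<in> I"; cases "j \<in> I") (auto simp: u_def inj_on_def bij_betw_def)
  qed
  moreover have "range u \<subseteq> u0 ` I \<union> C" using fC by (auto simp: u_def)
  ultimately have "u i \<bullet> u j = (if i = j then 1 else 0)" for i j
    by (rule orthonormal_family_inner) simp_all
  then show ?thesis using that[of u] by (simp add: u_def)
qed

lemma is_svdI:
  fixes M :: "real^'d^'k" and U :: "real^'d^'k" and V :: "real^'d^'d"
  assumes U: "transpose U ** U = mat 1" and V: "transpose V ** V = mat 1"
    and MV: "\<And>i. M *v column i V = sig i *\<^sub>R column i U" and sig: "\<And>i. 0 \<le> sig i"
  shows "is_svd M U (\<chi> i j. if i = j then sig i else 0) V"
proof -
  define Sig :: "real^'d^'d" where "Sig = (\<chi> i j. if i = j then sig i else 0)"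
  have V': "V ** transpose V = mat 1" using V matrix_left_right_inverse by blast
  have "column i (M ** V) = column i (U ** Sig)" for i
  proof -
    have "column i Sig = sig i *\<^sub>R axis i 1"
      by (simp add: Sig_def column_def vec_eq_iff axis_def)
    then show ?thesis
      by (simp add: column_matrix_mult MV matrix_vector_mult_scaleR matrix_vector_mult_basis)
  qed
  then have "M ** V = U ** Sig" by (simp add: vec_eq_iff column_def)
  then have "M ** V ** transpose V = U ** Sig ** transpose V" by simp
  then have "M = U ** Sig ** transpose V" by (metis V' matrix_mul_assoc matrix_mul_rid)
  then show ?thesis using U V V' sig unfolding is_svd_def Sig_def by simp
qed

lemma is_svd_exists:
  fixes M :: "real^'d::finite^'k::finite"
  assumes "CARD('d) \<le> CARD('k)"
  obtains U Sig V where "is_svd M U Sig V"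
proof -
  define K where "K = transpose M ** M"
  have "transpose K = K" by (simp add: K_def matrix_transpose_mul)
  then obtain g :: "'d \<Rightarrow> real^'d" and lam where
    g_orth: "\<And>i j. g i \<bullet> g j = (if i = j then 1 else 0)" and lam: "\<And>i. K *v g i = lam i *\<^sub>R g i"
    by (rule symmetric_matrix_orthonormal_eigenvectors) blast
  have Mg: "(M *v g i) \<bullet> (M *v g j) = (if i = j then lam i else 0)" for i j
    using inner_transpose_mult[of M "M *v g j" "g i"] lam[of j] g_orth[of j i]
    by (cases "i = j") (simp_all add: K_def matrix_vector_mul_assoc inner_commute)
  have lam_nonneg: "0 \<le> lam i" for i using Mg[of i i] inner_ge_zero[of "M *v g i"] by simp
  define u0 where "u0 i = (1 / sqrt (lam i)) *\<^sub>R (M *v g i)" for i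
  have u0_orth: "u0 i \<bullet> u0 j = (if i = j then 1 else 0)" if "lam i \<noteq> 0" "lam j \<noteq> 0" for i j
    using Mg[of i j] that lam_nonneg[of i] by (auto simp: u0_def)
  obtain u where u0: "\<And>i. lam i \<noteq> 0 \<Longrightarrow> u i = u0 i"
    and u: "\<And>i j. u i \<bullet> u j = (if i = j then 1 else 0)"
    using orthonormal_family_extend[of "{i. lam i \<noteq> 0}" u0, OF _ assms] u0_orth by auto
  have "M *v g i = sqrt (lam i) *\<^sub>R u i" for i
  proof (cases "lam i = 0")
    case True
    then show ?thesis using Mg[of i i] by simp
  next
    case False
    then show ?thesis using u0[OF False] lam_nonneg[of i] by (simp add: u0_def)
  qed
  then have "is_svd M (matrix_of_columns u) (\<chi> i j. if i = j then sqrt (lam i) else 0)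
      (matrix_of_columns g)"
    by (intro is_svdI orthonormal_columns_matrix_of_columns u g_orth) (simp_all add: lam_nonneg)
  then show ?thesis using that by blast
qed

section \<open>Comparison of spectra of dominated quadratic forms\<close>

lemma norm_power2_vec: "(norm (c::real^'d))\<^sup>2 = (\<Sum>i\<in>UNIV. (c $ i)\<^sup>2)"
  unfolding power2_norm_eq_inner inner_vec_def by (simp add: power2_eq_square)

lemma weighted_sum_squares_ge:
  fixes c :: "real^'d" and d :: "'d \<Rightarrow> real"
  assumes "\<And>i. c $ i \<noteq> 0 \<Longrightarrow> t \<le> d i"
  shows "t * (norm c)\<^sup>2 \<le> (\<Sum>i\<in>UNIV. d i * (c $ i)\<^sup>2)"
proof -
  have "0 \<le> (\<Sum>i\<in>UNIV. (d i - t) * (c $ i)\<^sup>2)"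
    by (rule sum_nonneg) (metis assms diff_ge_0_iff_ge mult_nonneg_nonneg zero_le_power2
        power_zero_numeral mult_zero_right)
  then show ?thesis
    by (simp add: norm_power2_vec left_diff_distrib sum_subtractf sum_distrib_left)
qed

lemma weighted_sum_squares_less:
  fixes c :: "real^'d" and d :: "'d \<Rightarrow> real"
  assumes "\<And>i. c $ i \<noteq> 0 \<Longrightarrow> d i < t" and "c \<noteq> 0"
  shows "(\<Sum>i\<in>UNIV. d i * (c $ i)\<^sup>2) < t * (norm c)\<^sup>2"
proof -
  obtain j where "c $ j \<noteq> 0" using \<open>c \<noteq> 0\<close> by (auto simp: vec_eq_iff)
  have "0 < (\<Sum>i\<in>UNIV. (t - d i) * (c $ i)\<^sup>2)"
  proof (rule sum_pos2)
    show "0 < (t - d j) * (c $ j)\<^sup>2" using assms(1) \<open>c $ j \<noteq> 0\<close> by simp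
    show "0 \<le> (t - d i) * (c $ i)\<^sup>2" for i
      using assms(1)[of i] by (cases "c $ i = 0") auto
  qed auto
  then show ?thesis
    by (simp add: norm_power2_vec left_diff_distrib sum_subtractf sum_distrib_left)
qed

lemma transpose_mult_component_eq_0:
  fixes P :: "real^'d^'n"
  assumes "transpose P ** P = mat 1" "x \<in> span ((\<lambda>i. column i P) ` I)" "j \<notin> I"
  shows "(transpose P *v x) $ j = 0"
proof -
  have "orthogonal (column j P) x"
    using assms(2) by (rule orthogonal_to_span)
      (use assms(1,3) in \<open>auto simp: orthonormal_columns_iff orthogonal_def\<close>)
  then show ?thesis by (simp add: transpose_mult_component orthogonal_def)
qed

text \<open>If the claim failed, the eigenvectors for the a's above t and those for the b's below t
  would span subspaces meeting nontrivially, and a common nonzero vector violates \<open>le\<close>.\<close>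
lemma card_superlevel_le_if_quadratic_form_le:
  fixes P Q :: "real^'d^'d" and a b :: "'d \<Rightarrow> real"
  assumes P: "orthogonal_matrix P" and Q: "orthogonal_matrix Q"
    and le: "\<And>x. (\<Sum>i\<in>UNIV. a i * ((transpose P *v x) $ i)\<^sup>2)
                 \<le> (\<Sum>i\<in>UNIV. b i * ((transpose Q *v x) $ i)\<^sup>2)"
  shows "card {i. t \<le> a i} \<le> card {i. t \<le> b i}"
proof (rule ccontr)
  assume more: "\<not> ?thesis"
  define I where "I = {i. t \<le> a i}"
  define J where "J = {i. b i < t}"
  define S1 where "S1 = span ((\<lambda>i. column i P) ` I)"
  define S2 where "S2 = span ((\<lambda>i. column i Q) ` J)"
  have P1: "transpose P ** P = mat 1" and Q1: "transpose Q ** Q = mat 1"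
    using P Q by (simp_all add: orthogonal_matrix)
  have "J \<union> {i. t \<le> b i} = UNIV" "J \<inter> {i. t \<le> b i} = {}" by (auto simp: J_def)
  then have "card J + card {i. t \<le> b i} = CARD('d)"
    using card_Un_disjoint[of J "{i. t \<le> b i}"] by simp
  moreover have "dim {x + y |x y. x \<in> S1 \<and> y \<in> S2} + dim (S1 \<inter> S2) = dim S1 + dim S2"
    by (rule dim_sums_Int) (simp_all add: S1_def S2_def)
  moreover have "dim {x + y |x y. x \<in> S1 \<and> y \<in> S2} \<le> CARD('d)"
    using dim_subset_UNIV[where 'a="real^'d"] by simp
  moreover have "dim S1 = card I" "dim S2 = card J"
    unfolding S1_def S2_def using P1 Q1 by (simp_all add: dim_orthonormal_columns)
  ultimately have "dim (S1 \<inter> S2) \<noteq> 0" using more unfolding I_def by linarith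
  then obtain x where x: "x \<in> S1" "x \<in> S2" "x \<noteq> 0" using dim_eq_0[of "S1 \<inter> S2"] by auto
  have nP: "norm (transpose P *v x) = norm x" and nQ: "norm (transpose Q *v x) = norm x"
    using P Q norm_orthonormal_columns_mult[of "transpose P" x]
      norm_orthonormal_columns_mult[of "transpose Q" x] by (simp_all add: orthogonal_matrix_def)
  have "t \<le> a i" if "(transpose P *v x) $ i \<noteq> 0" for i
    using transpose_mult_component_eq_0[OF P1 x(1)[unfolded S1_def], of i] that by (auto simp: I_def)
  then have "t * (norm x)\<^sup>2 \<le> (\<Sum>i\<in>UNIV. a i * ((transpose P *v x) $ i)\<^sup>2)"
    by (rule weighted_sum_squares_ge[where c="transpose P *v x", unfolded nP])
  also have "\<dots> \<le> (\<Sum>i\<in>UNIV. b i * ((transpose Q *v x) $ i)\<^sup>2)" by (rule le)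
  also have "\<dots> < t * (norm x)\<^sup>2"
  proof (rule weighted_sum_squares_less[where c="transpose Q *v x", unfolded nQ])
    show "b i < t" if "(transpose Q *v x) $ i \<noteq> 0" for i
      using transpose_mult_component_eq_0[OF Q1 x(2)[unfolded S2_def], of i] that by (auto simp: J_def)
    show "transpose Q *v x \<noteq> 0" using nQ x(3) by auto
  qed
  finally show False by simp
qed

lemma sum_antimono_le_if_card_superlevel_le:
  fixes a :: "'a \<Rightarrow> real" and b :: "'b \<Rightarrow> real" and h :: "real \<Rightarrow> real"
  assumes h: "\<And>x y. x \<in> R \<Longrightarrow> y \<in> R \<Longrightarrow> x \<le> y \<Longrightarrow> h y \<le> h x"
  shows "finite I \<Longrightarrow> finite J \<Longrightarrow> card I = card J \<Longrightarrow> a ` I \<subseteq> R \<Longrightarrow> b ` J \<subseteq> R \<Longrightarrow>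
    (\<And>t. card {i\<in>I. t \<le> a i} \<le> card {j\<in>J. t \<le> b j}) \<Longrightarrow>
    (\<Sum>j\<in>J. h (b j)) \<le> (\<Sum>i\<in>I. h (a i))"
proof (induction "card I" arbitrary: I J)
  case 0
  then show ?case by simp
next
  case (Suc n)
  \<comment> \<open>match a largest a-value with a largest b-value, which is at least as large\<close>
  have "I \<noteq> {}" "J \<noteq> {}" using Suc.hyps(2) Suc.prems(3) by auto
  have "Max (a ` I) \<in> a ` I" using Suc.prems(1) \<open>I \<noteq> {}\<close> by simp
  then obtain i0 where "i0 \<in> I" "a i0 = Max (a ` I)" by (metis imageE)
  then have i0: "i0 \<in> I" "\<And>i. i \<in> I \<Longrightarrow> a i \<le> a i0" using Suc.prems(1) by auto
  have "Max (b ` J) \<in> b ` J" using Suc.prems(2) \<open>J \<noteq> {}\<close> by simp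
  then obtain j0 where "j0 \<in> J" "b j0 = Max (b ` J)" by (metis imageE)
  then have j0: "j0 \<in> J" "\<And>j. j \<in> J \<Longrightarrow> b j \<le> b j0" using Suc.prems(2) by auto
  have "i0 \<in> {i\<in>I. a i0 \<le> a i}" using i0 by simp
  then have "card {i\<in>I. a i0 \<le> a i} \<noteq> 0" using Suc.prems(1) by auto
  then have "card {j\<in>J. a i0 \<le> b j} \<noteq> 0" using Suc.prems(6)[of "a i0"] by linarith
  then obtain j1 where "j1 \<in> J" "a i0 \<le> b j1" by (auto simp: card_eq_0_iff)
  then have ab: "a i0 \<le> b j0" using j0(2)[of j1] by linarith
  have "(\<Sum>j\<in>J - {j0}. h (b j)) \<le> (\<Sum>i\<in>I - {i0}. h (a i))"
  proof (rule Suc.hyps(1))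
    show "n = card (I - {i0})" "card (I - {i0}) = card (J - {j0})"
      using Suc.hyps(2) Suc.prems(1,2,3) i0 j0 by auto
    show "card {i \<in> I - {i0}. t \<le> a i} \<le> card {j \<in> J - {j0}. t \<le> b j}" for t
    proof (cases "t \<le> a i0")
      case True
      have "{i \<in> I - {i0}. t \<le> a i} = {i\<in>I. t \<le> a i} - {i0}"
        "{j \<in> J - {j0}. t \<le> b j} = {j\<in>J. t \<le> b j} - {j0}" by auto
      then show ?thesis using True ab i0 j0 Suc.prems(1,2) Suc.prems(6)[of t] by (simp add: card_Diff_singleton)
    next
      case False
      then have "\<not> t \<le> a i" if "i \<in> I" for i using i0(2)[OF that] by linarith
      then have "{i \<in> I - {i0}. t \<le> a i} = {}" by blast
      then show ?thesis by (simp only: card.empty le0)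
    qed
  qed (use Suc.prems in auto)
  moreover have "h (b j0) \<le> h (a i0)" using h ab Suc.prems(4,5) i0 j0 by blast
  ultimately show ?case
    using Suc.prems(1,2) i0 j0 by (simp add: sum.remove)
qed

section \<open>Singular values and orthogonal projections\<close>

lemma diagonal_matrix_mult_component:
  fixes D :: "real^'d^'d"
  assumes "\<And>i j. i \<noteq> j \<Longrightarrow> D $ i $ j = 0"
  shows "(D *v z) $ i = D $ i $ i * z $ i"
proof -
  have "(D *v z) $ i = (\<Sum>j\<in>UNIV. D $ i $ j * z $ j)" by (simp add: matrix_vector_mult_def)
  also have "\<dots> = (\<Sum>j\<in>{i}. D $ i $ j * z $ j)"
    by (rule sum.mono_neutral_right) (use assms in auto)
  finally show ?thesis by simp
qed

lemma is_svd_norm_transpose_mult: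
  fixes M U :: "real^'d^'k" and Sig V :: "real^'d^'d"
  assumes "is_svd M U Sig V"
  shows "(norm (transpose M *v x))\<^sup>2 = (\<Sum>i\<in>UNIV. (Sig $ i $ i)\<^sup>2 * ((transpose U *v x) $ i)\<^sup>2)"
proof -
  have diag: "\<And>i j. i \<noteq> j \<Longrightarrow> Sig $ i $ j = 0" and V: "transpose V ** V = mat 1"
    and M: "M = U ** Sig ** transpose V" using assms by (auto simp: is_svd_def)
  have "Sig $ j $ i = Sig $ i $ j" for i j using diag by (cases "i = j") auto
  then have "transpose Sig = Sig" by (simp add: vec_eq_iff transpose_def)
  then have "transpose M *v x = V *v (Sig *v (transpose U *v x))"
    by (simp add: M matrix_transpose_mul matrix_vector_mul_assoc)
  then have "norm (transpose M *v x) = norm (Sig *v (transpose U *v x))"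
    using norm_orthonormal_columns_mult[OF V] by simp
  then show ?thesis
    by (simp add: norm_power2_vec diagonal_matrix_mult_component[OF diag] power_mult_distrib)
qed

lemma is_svd_diag_bounds:
  fixes A :: "real^'k^'n" and B :: "real^'d^'n"
  assumes A: "transpose A ** A = mat 1" and B: "transpose B ** B = mat 1"
    and svd: "is_svd (transpose A ** B) U Sig V"
  shows "0 \<le> Sig $ i $ i" "Sig $ i $ i \<le> 1"
proof -
  show nonneg: "0 \<le> Sig $ i $ i" using svd by (simp add: is_svd_def)
  have U: "transpose U ** U = mat 1" using svd by (simp add: is_svd_def)
  define x where "x = U *v axis i 1"
  have "transpose U *v x = axis i 1" by (simp add: x_def matrix_vector_mul_assoc U)
  then have "(norm (transpose (transpose A ** B) *v x))\<^sup>2 = (\<Sum>j\<in>UNIV. (Sig $ j $ j)\<^sup>2 * (axis i 1 $ j)\<^sup>2)"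
    using is_svd_norm_transpose_mult[OF svd, of x] by simp
  also have "\<dots> = (\<Sum>j\<in>UNIV. if j = i then (Sig $ j $ j)\<^sup>2 else 0)"
    by (intro sum.cong) (auto simp: axis_def)
  also have "\<dots> = (Sig $ i $ i)\<^sup>2" by simp
  finally have "(Sig $ i $ i)\<^sup>2 = (norm (transpose B *v (A *v x)))\<^sup>2"
    by (simp add: matrix_transpose_mul matrix_vector_mul_assoc)
  also have "\<dots> \<le> (norm (A *v x))\<^sup>2"
    by (simp add: norm_transpose_orthonormal_columns_le[OF B] power_mono)
  also have "\<dots> = 1"
    using norm_orthonormal_columns_mult[OF A] norm_orthonormal_columns_mult[OF U] by (simp add: x_def)
  finally show "Sig $ i $ i \<le> 1" using nonneg by (simp add: power_le_one_iff abs_le_square_iff)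
qed

lemma onb_matrix_project_subset:
  fixes W :: "real^'e^'n" and B :: "real^'d^'n"
  assumes W: "onb_matrix W Z" and B: "onb_matrix B Y" and "Y \<subseteq> Z"
  shows "W ** (transpose W ** B) = B"
proof (rule matrix_eq[THEN iffD2], intro allI)
  fix x
  have "B *v x \<in> Z"
    using assms matrix_vector_mult_in_columnspace[of B x] by (auto simp: onb_matrix_def)
  then show "(W ** (transpose W ** B)) *v x = B *v x"
    using W orthonormal_columns_project_span[of W "B *v x"]
    by (simp add: onb_matrix_def matrix_vector_mul_assoc[symmetric])
qed

lemma transpose_onb_mult_project_subset:
  fixes W :: "real^'e^'n" and B :: "real^'d^'n"
  assumes "onb_matrix W Z" "onb_matrix B Y" "Y \<subseteq> Z"
  shows "transpose B *v (W *v (transpose W *v y)) = transpose B *v y"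
proof -
  have "transpose B ** W ** transpose W = transpose B"
    using arg_cong[OF onb_matrix_project_subset[OF assms], of transpose]
    by (simp add: matrix_transpose_mul matrix_mul_assoc)
  then show ?thesis by (simp add: matrix_vector_mul_assoc matrix_mul_assoc)
qed

lemma norm_transpose_onb_le_subset:
  fixes W :: "real^'e^'n" and B :: "real^'d^'n"
  assumes W: "onb_matrix W Z" and B: "onb_matrix B Y" and "Y \<subseteq> Z"
  shows "norm (transpose B *v y) \<le> norm (transpose W *v y)"
proof -
  have "norm (transpose B *v y) = norm (transpose B *v (W *v (transpose W *v y)))"
    by (simp add: transpose_onb_mult_project_subset[OF assms])
  also have "\<dots> \<le> norm (W *v (transpose W *v y))"
    using B by (simp add: onb_matrix_def norm_transpose_orthonormal_columns_le)
  also have "\<dots> = norm (transpose W *v y)"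
    using W by (simp add: onb_matrix_def norm_orthonormal_columns_mult)
  finally show ?thesis .
qed

lemma norm_transpose_onb_eq_subset:
  fixes W :: "real^'e^'n" and B :: "real^'d^'n"
  assumes W: "onb_matrix W Z" and B: "onb_matrix B Y" and "Y \<subseteq> Z"
    and "W *v (transpose W *v y) \<in> Y"
  shows "norm (transpose B *v y) = norm (transpose W *v y)"
proof -
  let ?z = "W *v (transpose W *v y)"
  have "norm (transpose B *v y) = norm (transpose B *v ?z)"
    by (simp add: transpose_onb_mult_project_subset[OF assms(1-3)])
  also have "\<dots> = norm (B *v (transpose B *v ?z))"
    using B by (simp add: onb_matrix_def norm_orthonormal_columns_mult)
  also have "\<dots> = norm ?z"
    using B assms(4) by (simp add: onb_matrix_def orthonormal_columns_project_span)
  also have "\<dots> = norm (transpose W *v y)"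
    using W by (simp add: onb_matrix_def norm_orthonormal_columns_mult)
  finally show ?thesis .
qed

lemma is_svd_project_in_span:
  fixes W :: "real^'e^'n" and S :: "real^'d^'n" and U :: "real^'d^'e"
  assumes S: "transpose S ** S = mat 1" and svd: "is_svd (transpose W ** S) U Sig V"
    and y: "y \<in> span (columns S)"
  shows "W *v (transpose W *v y) \<in> span (columns (W ** U))"
proof -
  define z where "z = (Sig ** transpose V) *v (transpose S *v y)"
  have "transpose W *v y = (transpose W ** S) *v (transpose S *v y)"
    using orthonormal_columns_project_span[OF S y] by (metis matrix_vector_mul_assoc)
  also have "\<dots> = U *v z"
    using svd by (simp add: z_def is_svd_def matrix_vector_mul_assoc matrix_mul_assoc)
  finally have "W *v (transpose W *v y) = (W ** U) *v z"
    by (simp add: matrix_vector_mul_assoc)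
  then show ?thesis by (simp add: matrix_vector_mult_in_columnspace)
qed

section \<open>Grassmann distance\<close>

lemma orthogonal_matrix_transpose_mult_onb:
  fixes A B :: "real^'d^'n"
  assumes A: "onb_matrix A X" and B: "onb_matrix B X"
  shows "orthogonal_matrix (transpose A ** B)"
proof -
  have "transpose (transpose A ** B) ** (transpose A ** B) = transpose B ** (A ** (transpose A ** B))"
    by (simp add: matrix_transpose_mul matrix_mul_assoc)
  also have "\<dots> = mat 1"
    using B onb_matrix_project_subset[OF A B] by (simp add: onb_matrix_def)
  finally show ?thesis by (simp add: orthogonal_matrix)
qed

lemma arccos_sqrt_power2_antimono:
  fixes x y :: real
  assumes "x \<in> {0..1}" "y \<in> {0..1}" "x \<le> y"
  shows "(arccos (sqrt y))\<^sup>2 \<le> (arccos (sqrt x))\<^sup>2"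
proof -
  have "0 \<le> sqrt x" "sqrt x \<le> sqrt y" "sqrt y \<le> 1" using assms by auto
  then have "arccos (sqrt y) \<le> arccos (sqrt x)" and "0 \<le> arccos (sqrt y)"
    by (intro arccos_le_arccos arccos_lbound; linarith)+
  then show ?thesis by (simp add: power_mono)
qed

lemma sum_arccos_power2_le_if_quadratic_form_le:
  fixes s1 s2 :: "'d::finite \<Rightarrow> real" and P1 P2 :: "real^'d^'d"
  assumes s1: "\<And>i. s1 i \<in> {0..1}" and s2: "\<And>i. s2 i \<in> {0..1}"
    and P: "orthogonal_matrix P1" "orthogonal_matrix P2"
    and le: "\<And>x. (\<Sum>i\<in>UNIV. (s1 i)\<^sup>2 * ((transpose P1 *v x) $ i)\<^sup>2)
                 \<le> (\<Sum>i\<in>UNIV. (s2 i)\<^sup>2 * ((transpose P2 *v x) $ i)\<^sup>2)"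
  shows "(\<Sum>i\<in>UNIV. (arccos (s2 i))\<^sup>2) \<le> (\<Sum>i\<in>UNIV. (arccos (s1 i))\<^sup>2)"
proof -
  have "(\<Sum>i\<in>UNIV. (arccos (sqrt ((s2 i)\<^sup>2)))\<^sup>2) \<le> (\<Sum>i\<in>UNIV. (arccos (sqrt ((s1 i)\<^sup>2)))\<^sup>2)"
  proof (rule sum_antimono_le_if_card_superlevel_le[where R="{0..1}"
        and h="\<lambda>x. (arccos (sqrt x))\<^sup>2" and a="\<lambda>i. (s1 i)\<^sup>2" and b="\<lambda>i. (s2 i)\<^sup>2"])
    show "card {i \<in> UNIV. t \<le> (s1 i)\<^sup>2} \<le> card {i \<in> UNIV. t \<le> (s2 i)\<^sup>2}" for t
      using card_superlevel_le_if_quadratic_form_le[OF P le] by simp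
    show "(\<lambda>i. (s1 i)\<^sup>2) ` UNIV \<subseteq> {0..1}" "(\<lambda>i. (s2 i)\<^sup>2) ` UNIV \<subseteq> {0..1}"
      using s1 s2 by (auto simp: power_le_one)
  qed (auto intro: arccos_sqrt_power2_antimono)
  then show ?thesis using s1 s2 by simp
qed

lemma grassmann_dist_witness:
  fixes X Y :: "(real^'n) set"
  assumes "subspace X" "dim X = CARD('d::finite)" "subspace Y" "dim Y = CARD('d)"
  obtains A B :: "real^'d^'n" and U Sig V :: "real^'d^'d"
  where "onb_matrix A X" "onb_matrix B Y" "is_svd (transpose A ** B) U Sig V"
    "grassmann_dist TYPE('d) X Y = sqrt (\<Sum>i\<in>UNIV. (arccos (Sig $ i $ i))\<^sup>2)"
proof -
  obtain A :: "real^'d^'n" where A: "onb_matrix A X" using onb_matrix_exists[OF assms(1,2)] .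
  obtain B :: "real^'d^'n" where B: "onb_matrix B Y" using onb_matrix_exists[OF assms(3,4)] .
  obtain U Sig V where "is_svd (transpose A ** B) U Sig V" using is_svd_exists by blast
  then have "\<exists>r. \<exists>(A::real^'d^'n) (B::real^'d^'n) (U::real^'d^'d) Sig V.
      onb_matrix A X \<and> onb_matrix B Y \<and> is_svd (transpose A ** B) U Sig V \<and>
      r = sqrt (\<Sum>i\<in>UNIV. (arccos (Sig $ i $ i))\<^sup>2)" using A B by blast
  from someI_ex[OF this] show ?thesis using that unfolding grassmann_dist_def by blast
qed

text \<open>The hypothesis is required for all orthonormal bases because the Hilbert choice in
  the definition of the distance may pick any of them.\<close>
lemma grassmann_dist_le_if_projection_norm_le:
  fixes X Y1 Y2 :: "(real^'n) set"
  assumes X: "subspace X" "dim X = CARD('d::finite)"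
    and Y1: "subspace Y1" "dim Y1 = CARD('d)" and Y2: "subspace Y2" "dim Y2 = CARD('d)"
    and dom: "\<And>(B1::real^'d^'n) (B2::real^'d^'n) y.
      onb_matrix B1 Y1 \<Longrightarrow> onb_matrix B2 Y2 \<Longrightarrow> y \<in> X \<Longrightarrow>
      norm (transpose B1 *v y) \<le> norm (transpose B2 *v y)"
  shows "grassmann_dist TYPE('d) X Y2 \<le> grassmann_dist TYPE('d) X Y1"
proof -
  obtain A1 B1 :: "real^'d^'n" and U1 Sig1 V1 :: "real^'d^'d" where
    w1: "onb_matrix A1 X" "onb_matrix B1 Y1" "is_svd (transpose A1 ** B1) U1 Sig1 V1"
      "grassmann_dist TYPE('d) X Y1 = sqrt (\<Sum>i\<in>UNIV. (arccos (Sig1 $ i $ i))\<^sup>2)"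
    using grassmann_dist_witness[OF X Y1] .
  obtain A2 B2 :: "real^'d^'n" and U2 Sig2 V2 :: "real^'d^'d" where
    w2: "onb_matrix A2 X" "onb_matrix B2 Y2" "is_svd (transpose A2 ** B2) U2 Sig2 V2"
      "grassmann_dist TYPE('d) X Y2 = sqrt (\<Sum>i\<in>UNIV. (arccos (Sig2 $ i $ i))\<^sup>2)"
    using grassmann_dist_witness[OF X Y2] .
  define Q where "Q = transpose A1 ** A2"
  have "(\<Sum>i\<in>UNIV. (Sig1 $ i $ i)\<^sup>2 * ((transpose U1 *v x) $ i)\<^sup>2)
      \<le> (\<Sum>i\<in>UNIV. (Sig2 $ i $ i)\<^sup>2 * ((transpose (Q ** U2) *v x) $ i)\<^sup>2)" for x
  proof -
    have "A1 *v x \<in> X" using w1(1) matrix_vector_mult_in_columnspace[of A1 x] by (simp add: onb_matrix_def)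
    then have "transpose B2 *v (A2 *v (transpose A2 *v (A1 *v x))) = transpose B2 *v (A1 *v x)"
      using w2(1) orthonormal_columns_project_span[of A2 "A1 *v x"] by (simp add: onb_matrix_def)
    then have "transpose (transpose A2 ** B2) *v (transpose Q *v x) = transpose B2 *v (A1 *v x)"
      by (simp add: Q_def matrix_transpose_mul matrix_vector_mul_assoc[symmetric])
    moreover have "transpose (transpose A1 ** B1) *v x = transpose B1 *v (A1 *v x)"
      by (simp add: matrix_transpose_mul matrix_vector_mul_assoc)
    moreover have "transpose (Q ** U2) *v x = transpose U2 *v (transpose Q *v x)"
      by (simp add: matrix_transpose_mul matrix_vector_mul_assoc)
    ultimately show ?thesis
      using is_svd_norm_transpose_mult[OF w1(3), of x] is_svd_norm_transpose_mult[OF w2(3), of "transpose Q *v x"]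
        power_mono[OF dom[OF w1(2) w2(2) \<open>A1 *v x \<in> X\<close>] norm_ge_zero, of 2] by simp
  qed
  moreover have "orthogonal_matrix U1" using w1(3) by (simp add: is_svd_def orthogonal_matrix)
  moreover have "orthogonal_matrix (Q ** U2)"
    using orthogonal_matrix_transpose_mult_onb[OF w1(1) w2(1)] w2(3)
    unfolding orthogonal_matrix Q_def is_svd_def by (blast intro: orthonormal_columns_mult)
  moreover have "Sig1 $ i $ i \<in> {0..1}" "Sig2 $ i $ i \<in> {0..1}" for i
    using is_svd_diag_bounds[OF _ _ w1(3)] is_svd_diag_bounds[OF _ _ w2(3)] w1(1,2) w2(1,2)
    by (auto simp: onb_matrix_def)
  ultimately have "(\<Sum>i\<in>UNIV. (arccos (Sig2 $ i $ i))\<^sup>2) \<le> (\<Sum>i\<in>UNIV. (arccos (Sig1 $ i $ i))\<^sup>2)"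
    by (intro sum_arccos_power2_le_if_quadratic_form_le) 
  then show ?thesis using w1(4) w2(4) by simp
qed

theorem lemma3:
  fixes WW SS :: "(real^'n) set"
    and W :: "real^'d2::finite^'n"
    and S :: "real^'d1::finite^'n"
    and U :: "real^'d1^'d2"
    and Sig V :: "real^'d1^'d1"
  assumes "subspace WW" "dim WW = CARD('d2)"
    and "subspace SS" "dim SS = CARD('d1)"
    and "CARD('d1) \<le> CARD('d2)"
    and "onb_matrix W WW" and "onb_matrix S SS"
    and "is_svd (transpose W ** S) U Sig V"
  shows "is_subspace_projection TYPE('d1) SS WW (span (columns (W ** U)))"
proof -
  define S' where "S' = span (columns (W ** U))"
  have WU: "onb_matrix (W ** U) S'"
    using assms(6,8) orthonormal_columns_mult by (auto simp: S'_def onb_matrix_def is_svd_def)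
  have S'_sub: "S' \<subseteq> WW"
    using span_columns_matrix_mult_subset[of W U] assms(6) by (simp add: S'_def onb_matrix_def)
  have dim_S': "dim S' = CARD('d1)"
    using WU dim_columns_orthonormal by (simp add: S'_def onb_matrix_def)
  have "grassmann_dist TYPE('d1) SS S' \<le> grassmann_dist TYPE('d1) SS S''"
    if "subspace S''" "S'' \<subseteq> WW" "dim S'' = CARD('d1)" for S''
  proof (rule grassmann_dist_le_if_projection_norm_le[OF assms(3,4) that(1,3)])
    fix B1 B2 :: "real^'d1^'n" and y assume B: "onb_matrix B1 S''" "onb_matrix B2 S'" and "y \<in> SS"
    then have "W *v (transpose W *v y) \<in> S'"
      using is_svd_project_in_span[OF _ assms(8)] assms(7) by (simp add: S'_def onb_matrix_def)
    then show "norm (transpose B1 *v y) \<le> norm (transpose B2 *v y)"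
      using norm_transpose_onb_le_subset[OF assms(6) B(1) that(2)]
        norm_transpose_onb_eq_subset[OF assms(6) B(2) S'_sub] by simp
  qed (use dim_S' in \<open>simp_all add: S'_def\<close>)
  then show ?thesis
    using S'_sub dim_S' by (simp add: is_subspace_projection_def S'_def)
qed

end
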